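(* Let $r=\langle L\leftarrow K\rightarrow R\rangle$ be a rule of an R-GT system over $\mathcal L$. Then for all TLRGs $G,H$ over $\mathcal L$: $G\Rightarrow_r H$ (in the R-GT sense) if and only if $e(G)\Rightarrow_{e(r)}e(H)$ (in the T-GT sense), where $e(r)=\langle e(L)\leftarrow e(K)\rightarrow e(R)\rangle$ with the encoded inclusions.
   Context: Let $\mathcal L=(\mathcal L_V,\mathcal L_E)$ be a label alphabet with $\mathcal L_V\cap\mathcal L_E=\emptyset$ and $\{\square,0,1\}\cap(\mathcal L_V\cup\mathcal L_E)=\emptyset$. R-GT setting: graphs $G=(V,E,s,t,l,m,p)$ with $V,E$ finite, $s,t:E\to V$ total, $l:V\rightharpoonup\mathcal L_V$ partial, $m:E\to\mathcal L_E$ total, $p:V\rightharpoonup\{0,1\}$ partial (rootedness); TLRG = $l,p$ total; morphisms preserve sources, targets, edge labels, and node labels and rootedness wherever defined. A rule has TLRGs $L,R$ and a common subgraph $K$ (sets included, $s,t,m$ restricted, $l_K\subseteq l_L$, $p_K\subseteq p_L$, likewise for $R$). Applied to TLRG $G$ via an injective $g:L\to G$ satisfying the dangling condition (no edge outside $g(L)$ incident to a node of $g(V_L\setminus V_K)$): delete images of items of $L$ not in $K$ and undefine label/rootedness of $g_V(v)$ where undefined for $v\in V_K$; add disjointly items of $R$ not in $K$ and set label/rootedness of $g_V(v)$ to $l_R(v)/p_R(v)$ where undefined in $K$; $G\Rightarrow_r H$ if $H$ is isomorphic to the result. T-GT setting: totally labelled graphs $(V,E,s,t,l,m)$, morphisms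 preserving sources, targets, labels; rules $\langle L\leftarrow K\rightarrow R\rangle$ of totally labelled graphs with $K$ a subgraph of $L,R$; a direct derivation via an injective match satisfying the dangling condition deletes $g(L\setminus K)$ and adds $R\setminus K$ disjointly (result up to isomorphism). Encoding: $e(\mathcal L)=(\{\square\},\mathcal L_E\cup\mathcal L_V\cup\{0,1\})$; for a graph $G$, $e(G)$ has nodes $V$ all labelled $\square$, an edge $(e,0)$ from $s(e)$ to $t(e)$ labelled $m(e)$ for each $e\in E$, a loop $(v,1)$ at $v$ labelled $l(v)$ for each $v$ with $l(v)$ defined, and a loop $(v,2)$ at $v$ labelled $p(v)$ for each $v$ with $p(v)$ defined; morphisms are encoded by $g_V$ on nodes, $(e,0)\mapsto(g_E(e),0)$, $(v,i)\mapsto(g_V(v),i)$. *)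

theory Defs
  imports Main
begin

text \<open>Label alphabet: node labels of type 'lv (L_V), edge labels of type 'le (L_E).
  Rootedness p(v) in {0,1} is encoded as bool (0 = False, 1 = True).
  Partial functions are option-valued.\<close>

record ('v,'e,'lv,'le) rgraph =
  rnodes :: "'v set"
  redges :: "'e set"
  rsrc   :: "'e \<Rightarrow> 'v"
  rtgt   :: "'e \<Rightarrow> 'v"
  rnlab  :: "'v \<Rightarrow> 'lv option"
  relab  :: "'e \<Rightarrow> 'le"
  rroot  :: "'v \<Rightarrow> bool option"

definition rwf :: "('v,'e,'lv,'le) rgraph \<Rightarrow> bool" where
  "rwf G \<longleftrightarrow> finite (rnodes G) \<and> finite (redges G)
     \<and> (\<forall>e\<in>redges G. rsrc G e \<in> rnodes G \<and> rtgt G e \<in> rnodes G)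
     \<and> dom (rnlab G) \<subseteq> rnodes G \<and> dom (rroot G) \<subseteq> rnodes G"

definition tlrg :: "('v,'e,'lv,'le) rgraph \<Rightarrow> bool" where
  "tlrg G \<longleftrightarrow> rwf G \<and> dom (rnlab G) = rnodes G \<and> dom (rroot G) = rnodes G"

definition rsubgraph :: "('v,'e,'lv,'le) rgraph \<Rightarrow> ('v,'e,'lv,'le) rgraph \<Rightarrow> bool" where
  "rsubgraph K L \<longleftrightarrow> rnodes K \<subseteq> rnodes L \<and> redges K \<subseteq> redges L
     \<and> (\<forall>e\<in>redges K. rsrc K e = rsrc L e \<and> rtgt K e = rtgt L e \<and> relab K e = relab L e)
     \<and> rnlab K \<subseteq>\<^sub>m rnlab L \<and> rroot K \<subseteq>\<^sub>m rroot L"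

definition rrule :: "('a,'b,'lv,'le) rgraph \<Rightarrow> ('a,'b,'lv,'le) rgraph \<Rightarrow> ('a,'b,'lv,'le) rgraph \<Rightarrow> bool" where
  "rrule L K R \<longleftrightarrow> tlrg L \<and> tlrg R \<and> rwf K \<and> rsubgraph K L \<and> rsubgraph K R"

definition rmorph :: "('a,'b,'lv,'le) rgraph \<Rightarrow> ('v,'e,'lv,'le) rgraph \<Rightarrow> ('a \<Rightarrow> 'v) \<Rightarrow> ('b \<Rightarrow> 'e) \<Rightarrow> bool" where
  "rmorph L G gV gE \<longleftrightarrow> gV ` rnodes L \<subseteq> rnodes G \<and> gE ` redges L \<subseteq> redges G
     \<and> (\<forall>e\<in>redges L. rsrc G (gE e) = gV (rsrc L e) \<and> rtgt G (gE e) = gV (rtgt L e)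
                      \<and> relab G (gE e) = relab L e)
     \<and> (\<forall>v\<in>rnodes L. \<forall>l. rnlab L v = Some l \<longrightarrow> rnlab G (gV v) = Some l)
     \<and> (\<forall>v\<in>rnodes L. \<forall>b. rroot L v = Some b \<longrightarrow> rroot G (gV v) = Some b)"

definition riso :: "('v,'e,'lv,'le) rgraph \<Rightarrow> ('w,'f,'lv,'le) rgraph \<Rightarrow> bool" where
  "riso G H \<longleftrightarrow> (\<exists>fV fE. bij_betw fV (rnodes G) (rnodes H) \<and> bij_betw fE (redges G) (redges H)
     \<and> (\<forall>e\<in>redges G. rsrc H (fE e) = fV (rsrc G e) \<and> rtgt H (fE e) = fV (rtgt G e)
                      \<and> relab H (fE e) = relab G e)
     \<and> (\<forall>v\<in>rnodes G. rnlab H (fV v) = rnlab G v \<and> rroot H (fV v) = rroot G v))"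

definition rresult :: "('v,'e,'lv,'le) rgraph \<Rightarrow> ('a,'b,'lv,'le) rgraph \<Rightarrow> ('a,'b,'lv,'le) rgraph
     \<Rightarrow> ('a,'b,'lv,'le) rgraph \<Rightarrow> ('a \<Rightarrow> 'v) \<Rightarrow> ('b \<Rightarrow> 'e) \<Rightarrow> ('v + 'a, 'e + 'b, 'lv, 'le) rgraph" where
  "rresult G L K R gV gE =
   (let
      cod = (\<lambda>x. if x \<in> rnodes K then Inl (gV x) else Inr x);
      kinv = (\<lambda>v. the_inv_into (rnodes L) gV v)
    in
   \<lparr> rnodes = Inl ` (rnodes G - gV ` (rnodes L - rnodes K)) \<union> Inr ` (rnodes R - rnodes K),
     redges = Inl ` (redges G - gE ` (redges L - redges K)) \<union> Inr ` (redges R - redges K),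
     rsrc = case_sum (\<lambda>e. Inl (rsrc G e)) (\<lambda>e. cod (rsrc R e)),
     rtgt = case_sum (\<lambda>e. Inl (rtgt G e)) (\<lambda>e. cod (rtgt R e)),
     rnlab = case_sum
        (\<lambda>v. if v \<in> gV ` {k \<in> rnodes K. rnlab K k = None} then rnlab R (kinv v) else rnlab G v)
        (\<lambda>v. rnlab R v),
     relab = case_sum (\<lambda>e. relab G e) (\<lambda>e. relab R e),
     rroot = case_sum
        (\<lambda>v. if v \<in> gV ` {k \<in> rnodes K. rroot K k = None} then rroot R (kinv v) else rroot G v)
        (\<lambda>v. rroot R v) \<rparr>)"

definition rderiv :: "('a,'b,'lv,'le) rgraph \<Rightarrow> ('a,'b,'lv,'le) rgraph \<Rightarrow> ('a,'b,'lv,'le) rgraph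
     \<Rightarrow> ('v,'e,'lv,'le) rgraph \<Rightarrow> ('w,'f,'lv,'le) rgraph \<Rightarrow> bool" where
  "rderiv L K R G H \<longleftrightarrow> (\<exists>gV gE.
     rmorph L G gV gE \<and> inj_on gV (rnodes L) \<and> inj_on gE (redges L)
     \<and> (\<forall>e \<in> redges G - gE ` redges L.
           rsrc G e \<notin> gV ` (rnodes L - rnodes K) \<and> rtgt G e \<notin> gV ` (rnodes L - rnodes K))
     \<and> riso (rresult G L K R gV gE) H)"

record ('v,'e,'l) tgraph =
  tnodes :: "'v set"
  tedges :: "'e set"
  tsrc   :: "'e \<Rightarrow> 'v"
  ttgt   :: "'e \<Rightarrow> 'v"
  tnlab  :: "'v \<Rightarrow> 'l"
  telab  :: "'e \<Rightarrow> 'l"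

definition tmorph :: "('a,'b,'l) tgraph \<Rightarrow> ('v,'e,'l) tgraph \<Rightarrow> ('a \<Rightarrow> 'v) \<Rightarrow> ('b \<Rightarrow> 'e) \<Rightarrow> bool" where
  "tmorph L G gV gE \<longleftrightarrow> gV ` tnodes L \<subseteq> tnodes G \<and> gE ` tedges L \<subseteq> tedges G
     \<and> (\<forall>e\<in>tedges L. tsrc G (gE e) = gV (tsrc L e) \<and> ttgt G (gE e) = gV (ttgt L e)
                      \<and> telab G (gE e) = telab L e)
     \<and> (\<forall>v\<in>tnodes L. tnlab G (gV v) = tnlab L v)"

definition tiso :: "('v,'e,'l) tgraph \<Rightarrow> ('w,'f,'l) tgraph \<Rightarrow> bool" where
  "tiso G H \<longleftrightarrow> (\<exists>fV fE. bij_betw fV (tnodes G) (tnodes H) \<and> bij_betw fE (tedges G) (tedges H)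
     \<and> (\<forall>e\<in>tedges G. tsrc H (fE e) = fV (tsrc G e) \<and> ttgt H (fE e) = fV (ttgt G e)
                      \<and> telab H (fE e) = telab G e)
     \<and> (\<forall>v\<in>tnodes G. tnlab H (fV v) = tnlab G v))"

definition tresult :: "('v,'e,'l) tgraph \<Rightarrow> ('a,'b,'l) tgraph \<Rightarrow> ('a,'b,'l) tgraph
     \<Rightarrow> ('a,'b,'l) tgraph \<Rightarrow> ('a \<Rightarrow> 'v) \<Rightarrow> ('b \<Rightarrow> 'e) \<Rightarrow> ('v + 'a, 'e + 'b, 'l) tgraph" where
  "tresult G L K R gV gE =
   (let cod = (\<lambda>x. if x \<in> tnodes K then Inl (gV x) else Inr x) in
   \<lparr> tnodes = Inl ` (tnodes G - gV ` (tnodes L - tnodes K)) \<union> Inr ` (tnodes R - tnodes K),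
     tedges = Inl ` (tedges G - gE ` (tedges L - tedges K)) \<union> Inr ` (tedges R - tedges K),
     tsrc = case_sum (\<lambda>e. Inl (tsrc G e)) (\<lambda>e. cod (tsrc R e)),
     ttgt = case_sum (\<lambda>e. Inl (ttgt G e)) (\<lambda>e. cod (ttgt R e)),
     tnlab = case_sum (\<lambda>v. tnlab G v) (\<lambda>v. tnlab R v),
     telab = case_sum (\<lambda>e. telab G e) (\<lambda>e. telab R e) \<rparr>)"

definition tderiv :: "('a,'b,'l) tgraph \<Rightarrow> ('a,'b,'l) tgraph \<Rightarrow> ('a,'b,'l) tgraph
     \<Rightarrow> ('v,'e,'l) tgraph \<Rightarrow> ('w,'f,'l) tgraph \<Rightarrow> bool" where
  "tderiv L K R G H \<longleftrightarrow> (\<exists>gV gE.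
     tmorph L G gV gE \<and> inj_on gV (tnodes L) \<and> inj_on gE (tedges L)
     \<and> (\<forall>e \<in> tedges G - gE ` tedges L.
           tsrc G e \<notin> gV ` (tnodes L - tnodes K) \<and> ttgt G e \<notin> gV ` (tnodes L - tnodes K))
     \<and> tiso (tresult G L K R gV gE) H)"

text \<open>Encoded edges: EE e = (e,0), ELab v = (v,1), ERoot v = (v,2).\<close>
datatype ('v,'e) enc_edge = EE 'e | ELab 'v | ERoot 'v

text \<open>Encoded alphabet e(L) = ({Box}, L_E \<union> L_V \<union> {0,1}); the datatype makes the
  components disjoint. RootBit False = 0, RootBit True = 1.\<close>
datatype ('lv,'le) enc_label = Box | EdgeL 'le | NodeL 'lv | RootBit bool

definition enc :: "('v,'e,'lv,'le) rgraph \<Rightarrow> ('v, ('v,'e) enc_edge, ('lv,'le) enc_label) tgraph" where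
  "enc G = \<lparr> tnodes = rnodes G,
     tedges = EE ` redges G \<union> ELab ` dom (rnlab G) \<union> ERoot ` dom (rroot G),
     tsrc = (\<lambda>x. case x of EE e \<Rightarrow> rsrc G e | ELab v \<Rightarrow> v | ERoot v \<Rightarrow> v),
     ttgt = (\<lambda>x. case x of EE e \<Rightarrow> rtgt G e | ELab v \<Rightarrow> v | ERoot v \<Rightarrow> v),
     tnlab = (\<lambda>_. Box),
     telab = (\<lambda>x. case x of EE e \<Rightarrow> EdgeL (relab G e)
                          | ELab v \<Rightarrow> NodeL (the (rnlab G v))
                          | ERoot v \<Rightarrow> RootBit (the (rroot G v))) \<rparr>"

end

(*
  The encoding is faithful on every ingredient of a direct derivation. The three kinds of
  encoded edges (edges, label loops, root loops) carry labels from disjoint parts of the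
  alphabet, so a morphism of encodings maps each kind to the same kind and is therefore the
  encoding of an R-GT morphism; injectivity transfers, and so does the dangling condition,
  because L is totally labelled and hence every node in the image of a match has its loops
  matched as well. Isomorphisms of totally labelled graphs transfer in the same way.
  What remains is the result: where the rule leaves a label (or rootedness) of a K-node
  undefined, the R-GT step overwrites it with the value from R, while the T-GT step deletes
  the corresponding loop of G and adds the loop of R. Attaching the added loop to the image of
  the K-node in G identifies the T-GT result with the encoding of the R-GT result.
*)

theory Submission
  imports Defs
begin

section \<open>Totally labelled graphs and their encoding\<close>

definition total_labels :: "('v,'e,'lv,'le) rgraph \<Rightarrow> bool" where
  "total_labels G \<longleftrightarrow> dom (rnlab G) = rnodes G \<and> dom (rroot G) = rnodes G"

lemma tlrg_total_labels: "tlrg G \<Longrightarrow> total_labels G"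
  unfolding tlrg_def total_labels_def by simp

lemma tedges_enc: "tedges (enc G) = EE ` redges G \<union> ELab ` dom (rnlab G) \<union> ERoot ` dom (rroot G)"
  unfolding enc_def by simp

lemma sum_image_mem_iff [simp]:
  "Inl x \<in> Inl ` A \<longleftrightarrow> x \<in> A" "Inr y \<in> Inr ` B \<longleftrightarrow> y \<in> B"
  "Inl x \<notin> Inr ` B" "Inr y \<notin> Inl ` A"
  by auto

lemma mem_enc_edge_sets [simp]:
  "EE e \<in> EE ` E \<union> ELab ` A \<union> ERoot ` B \<longleftrightarrow> e \<in> E"
  "ELab v \<in> EE ` E \<union> ELab ` A \<union> ERoot ` B \<longleftrightarrow> v \<in> A"
  "ERoot v \<in> EE ` E \<union> ELab ` A \<union> ERoot ` B \<longleftrightarrow> v \<in> B"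
  by auto

lemma mem_tedges_enc [simp]:
  "EE e \<in> tedges (enc G) \<longleftrightarrow> e \<in> redges G"
  "ELab v \<in> tedges (enc G) \<longleftrightarrow> v \<in> dom (rnlab G)"
  "ERoot v \<in> tedges (enc G) \<longleftrightarrow> v \<in> dom (rroot G)"
  unfolding tedges_enc by auto

lemma enc_simps [simp]:
  "tnodes (enc G) = rnodes G"
  "tsrc (enc G) (EE e) = rsrc G e" "tsrc (enc G) (ELab v) = v" "tsrc (enc G) (ERoot v) = v"
  "ttgt (enc G) (EE e) = rtgt G e" "ttgt (enc G) (ELab v) = v" "ttgt (enc G) (ERoot v) = v"
  "tnlab (enc G) w = Box"
  "telab (enc G) (EE e) = EdgeL (relab G e)"
  "telab (enc G) (ELab v) = NodeL (the (rnlab G v))"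
  "telab (enc G) (ERoot v) = RootBit (the (rroot G v))"
  unfolding enc_def by simp_all

lemma tedges_enc_total:
  "total_labels G \<Longrightarrow> tedges (enc G) = EE ` redges G \<union> ELab ` rnodes G \<union> ERoot ` rnodes G"
  unfolding total_labels_def tedges_enc by simp

lemma image_map_enc_edge:
  "map_enc_edge fV fE ` (EE ` E \<union> ELab ` A \<union> ERoot ` B)
     = EE ` fE ` E \<union> ELab ` fV ` A \<union> ERoot ` fV ` B"
  by (simp add: image_Un image_image)

lemma enc_edge_sets_diff:
  "(EE ` E \<union> ELab ` A \<union> ERoot ` B) - (EE ` E' \<union> ELab ` A' \<union> ERoot ` B')
     = EE ` (E - E') \<union> ELab ` (A - A') \<union> ERoot ` (B - B')"
  by auto

lemma ball_enc_edge_sets: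
  "(\<forall>x \<in> EE ` E \<union> ELab ` A \<union> ERoot ` B. P x)
     \<longleftrightarrow> (\<forall>e\<in>E. P (EE e)) \<and> (\<forall>v\<in>A. P (ELab v)) \<and> (\<forall>v\<in>B. P (ERoot v))"
  by blast

lemma inj_on_map_enc_edge_iff:
  assumes "inj_on fV A" "inj_on fV B"
  shows "inj_on (map_enc_edge fV fE) (EE ` E \<union> ELab ` A \<union> ERoot ` B) \<longleftrightarrow> inj_on fE E"
proof
  assume inj: "inj_on (map_enc_edge fV fE) (EE ` E \<union> ELab ` A \<union> ERoot ` B)"
  show "inj_on fE E"
  proof (rule inj_onI)
    fix x y assume "x \<in> E" "y \<in> E" "fE x = fE y"
    then have "map_enc_edge fV fE (EE x) = map_enc_edge fV fE (EE y)" by simp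
    then have "EE x = EE y"
      using inj_onD[OF inj] \<open>x \<in> E\<close> \<open>y \<in> E\<close> by blast
    then show "x = y" by simp
  qed
next
  assume "inj_on fE E"
  with assms show "inj_on (map_enc_edge fV fE) (EE ` E \<union> ELab ` A \<union> ERoot ` B)"
    by (auto intro!: inj_onI dest: inj_onD)
qed

lemma bij_betw_map_enc_edge_iff:
  assumes "bij_betw fV A A'" "bij_betw fV B B'"
  shows "bij_betw (map_enc_edge fV fE)
      (EE ` E \<union> ELab ` A \<union> ERoot ` B) (EE ` E' \<union> ELab ` A' \<union> ERoot ` B')
    \<longleftrightarrow> bij_betw fE E E'"
proof -
  have "EE ` fE ` E \<union> ELab ` A' \<union> ERoot ` B' = EE ` E' \<union> ELab ` A' \<union> ERoot ` B' \<longleftrightarrow> fE ` E = E'"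
    by blast
  then show ?thesis
    using assms inj_on_map_enc_edge_iff[of fV A B fE E]
    by (simp add: bij_betw_def image_map_enc_edge)
qed

section \<open>Morphisms and isomorphisms\<close>

text \<open>The label of an encoded edge determines its kind and its source determines the node of
  a loop, so a morphism of encodings is an encoded edge map on the encoded edges.\<close>
lemma tmorph_enc_factors:
  assumes "tmorph (enc L) (enc G) gV gE'"
  obtains gE where "\<And>x. x \<in> tedges (enc L) \<Longrightarrow> gE' x = map_enc_edge gV gE x"
proof
  fix x assume x: "x \<in> tedges (enc L)"
  have "tsrc (enc G) (gE' x) = gV (tsrc (enc L) x)" "telab (enc G) (gE' x) = telab (enc L) x"
    using assms x unfolding tmorph_def image_subset_iff by simp_all
  then show "gE' x = map_enc_edge gV (\<lambda>e. case gE' (EE e) of EE y \<Rightarrow> y | _ \<Rightarrow> undefined) x"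
    by (cases x; cases "gE' x") auto
qed

lemma tmorph_cong:
  "(\<And>x. x \<in> tedges L \<Longrightarrow> f x = g x) \<Longrightarrow> tmorph L G gV f \<longleftrightarrow> tmorph L G gV g"
  unfolding tmorph_def by (simp cong: image_cong)

lemma tmorph_enc_iff_rmorph:
  assumes "total_labels L"
  shows "tmorph (enc L) (enc G) gV (map_enc_edge gV gE) \<longleftrightarrow> rmorph L G gV gE"
proof
  assume "tmorph (enc L) (enc G) gV (map_enc_edge gV gE)"
  then have nodes: "gV ` rnodes L \<subseteq> rnodes G"
    and into: "\<And>x. x \<in> tedges (enc L) \<Longrightarrow> map_enc_edge gV gE x \<in> tedges (enc G)"
    and pres: "\<And>x. x \<in> tedges (enc L) \<Longrightarrow>
      tsrc (enc G) (map_enc_edge gV gE x) = gV (tsrc (enc L) x) \<and>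
      ttgt (enc G) (map_enc_edge gV gE x) = gV (ttgt (enc L) x) \<and>
      telab (enc G) (map_enc_edge gV gE x) = telab (enc L) x"
    unfolding tmorph_def image_subset_iff by simp_all
  have "gE e \<in> redges G \<and> rsrc G (gE e) = gV (rsrc L e) \<and> rtgt G (gE e) = gV (rtgt L e)
      \<and> relab G (gE e) = relab L e" if "e \<in> redges L" for e
    using into[of "EE e"] pres[of "EE e"] that by auto
  moreover have "rnlab G (gV v) = Some l" if "rnlab L v = Some l" for v l
    using into[of "ELab v"] pres[of "ELab v"] that by (auto simp: domI)
  moreover have "rroot G (gV v) = Some b" if "rroot L v = Some b" for v b
    using into[of "ERoot v"] pres[of "ERoot v"] that by (auto simp: domI)
  ultimately show "rmorph L G gV gE"
    unfolding rmorph_def using nodes by blast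
next
  assume r: "rmorph L G gV gE"
  have "map_enc_edge gV gE x \<in> tedges (enc G) \<and>
      tsrc (enc G) (map_enc_edge gV gE x) = gV (tsrc (enc L) x) \<and>
      ttgt (enc G) (map_enc_edge gV gE x) = gV (ttgt (enc L) x) \<and>
      telab (enc G) (map_enc_edge gV gE x) = telab (enc L) x" if x: "x \<in> tedges (enc L)" for x
  proof (cases x)
    case (EE e)
    with x r show ?thesis unfolding rmorph_def by auto
  next
    case (ELab v)
    with x assms obtain l where "v \<in> rnodes L" "rnlab L v = Some l"
      unfolding total_labels_def by auto
    with ELab r show ?thesis unfolding rmorph_def by auto
  next
    case (ERoot v)
    with x assms obtain b where "v \<in> rnodes L" "rroot L v = Some b"
      unfolding total_labels_def by auto
    with ERoot r show ?thesis unfolding rmorph_def by auto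
  qed
  with r show "tmorph (enc L) (enc G) gV (map_enc_edge gV gE)"
    unfolding rmorph_def tmorph_def by auto
qed

lemma tiso_iff_bij_tmorph:
  "tiso A B \<longleftrightarrow> (\<exists>fV fE. bij_betw fV (tnodes A) (tnodes B) \<and> bij_betw fE (tedges A) (tedges B)
     \<and> tmorph A B fV fE)"
  unfolding tiso_def tmorph_def by (auto simp: bij_betw_def; blast)

lemma riso_iff_bij_rmorph:
  assumes "total_labels A"
  shows "riso A B \<longleftrightarrow> (\<exists>fV fE. bij_betw fV (rnodes A) (rnodes B) \<and> bij_betw fE (redges A) (redges B)
     \<and> rmorph A B fV fE)"
proof -
  have labels: "rnlab B (fV v) = rnlab A v \<and> rroot B (fV v) = rroot A v \<longleftrightarrow>
      (\<forall>l. rnlab A v = Some l \<longrightarrow> rnlab B (fV v) = Some l)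
      \<and> (\<forall>b. rroot A v = Some b \<longrightarrow> rroot B (fV v) = Some b)"
    if "v \<in> rnodes A" for fV v
  proof -
    have "v \<in> dom (rnlab A)" "v \<in> dom (rroot A)"
      using assms that unfolding total_labels_def by simp_all
    then obtain l b where "rnlab A v = Some l" "rroot A v = Some b"
      by (meson domD)
    then show ?thesis by auto
  qed
  show ?thesis
    unfolding riso_def rmorph_def bij_betw_def using labels by (auto; blast)
qed

lemma riso_iff_tiso_enc:
  assumes "total_labels A" "total_labels B"
  shows "riso A B \<longleftrightarrow> tiso (enc A) (enc B)"
proof
  assume "riso A B"
  then obtain fV fE where V: "bij_betw fV (rnodes A) (rnodes B)"
    and E: "bij_betw fE (redges A) (redges B)" and m: "rmorph A B fV fE"
    using riso_iff_bij_rmorph[OF assms(1)] by blast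
  have "bij_betw (map_enc_edge fV fE) (tedges (enc A)) (tedges (enc B))"
    using V E by (simp add: tedges_enc_total assms bij_betw_map_enc_edge_iff)
  moreover have "tmorph (enc A) (enc B) fV (map_enc_edge fV fE)"
    using m tmorph_enc_iff_rmorph[OF assms(1)] by blast
  ultimately show "tiso (enc A) (enc B)"
    using V unfolding tiso_iff_bij_tmorph by auto
next
  assume "tiso (enc A) (enc B)"
  then obtain fV fE' where V: "bij_betw fV (rnodes A) (rnodes B)"
    and E': "bij_betw fE' (tedges (enc A)) (tedges (enc B))" and m': "tmorph (enc A) (enc B) fV fE'"
    unfolding tiso_iff_bij_tmorph by auto
  obtain fE where agree: "\<And>x. x \<in> tedges (enc A) \<Longrightarrow> fE' x = map_enc_edge fV fE x"
    using tmorph_enc_factors[OF m'] by blast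
  have "bij_betw (map_enc_edge fV fE) (tedges (enc A)) (tedges (enc B))"
    using E' bij_betw_cong[of "tedges (enc A)" fE' "map_enc_edge fV fE"] agree by blast
  then have "bij_betw fE (redges A) (redges B)"
    using V by (simp add: tedges_enc_total assms bij_betw_map_enc_edge_iff)
  moreover have "rmorph A B fV fE"
    using m' tmorph_cong[of "enc A" fE' "map_enc_edge fV fE", OF agree]
      tmorph_enc_iff_rmorph[OF assms(1)] by blast
  ultimately show "riso A B"
    using V riso_iff_bij_rmorph[OF assms(1)] by blast
qed

lemma tiso_trans: "tiso A B \<Longrightarrow> tiso B C \<Longrightarrow> tiso A C"
  unfolding tiso_def
  by (elim exE conjE, rule exI, rule exI) (auto intro: bij_betw_trans simp: bij_betw_apply)

text \<open>Graphs of type tgraph carry no well-formedness condition, so tiso is not symmetric in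
  general; it is for isomorphisms that are the identity on nodes.\<close>
lemma tiso_edge_renaming:
  assumes nodes: "tnodes A = tnodes B" and labels: "\<And>v. v \<in> tnodes A \<Longrightarrow> tnlab B v = tnlab A v"
    and bij: "bij_betw f (tedges A) (tedges B)"
    and pres: "\<And>e. e \<in> tedges A \<Longrightarrow>
      tsrc B (f e) = tsrc A e \<and> ttgt B (f e) = ttgt A e \<and> telab B (f e) = telab A e"
  shows "tiso A B" "tiso B A"
proof -
  show "tiso A B"
    unfolding tiso_def using assms by (intro exI[of _ id] exI[of _ f]) auto
  let ?g = "the_inv_into (tedges A) f"
  have g: "bij_betw ?g (tedges B) (tedges A)"
    by (rule bij_betw_the_inv_into[OF bij])
  have "tsrc A (?g e) = tsrc B e \<and> ttgt A (?g e) = ttgt B e \<and> telab A (?g e) = telab B e"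
    if "e \<in> tedges B" for e
    using pres[OF bij_betw_apply[OF g that]] f_the_inv_into_f_bij_betw[OF bij that] by simp
  then show "tiso B A"
    unfolding tiso_def using nodes labels g by (intro exI[of _ id] exI[of _ ?g]) auto
qed

section \<open>Matches\<close>

definition rmatch :: "('a,'b,'lv,'le) rgraph \<Rightarrow> ('a,'b,'lv,'le) rgraph \<Rightarrow> ('v,'e,'lv,'le) rgraph
    \<Rightarrow> ('a \<Rightarrow> 'v) \<Rightarrow> ('b \<Rightarrow> 'e) \<Rightarrow> bool" where
  "rmatch L K G gV gE \<longleftrightarrow> rmorph L G gV gE \<and> inj_on gV (rnodes L) \<and> inj_on gE (redges L)
     \<and> (\<forall>e \<in> redges G - gE ` redges L.
           rsrc G e \<notin> gV ` (rnodes L - rnodes K) \<and> rtgt G e \<notin> gV ` (rnodes L - rnodes K))"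

definition tmatch :: "('a,'b,'l) tgraph \<Rightarrow> ('a,'b,'l) tgraph \<Rightarrow> ('v,'e,'l) tgraph
    \<Rightarrow> ('a \<Rightarrow> 'v) \<Rightarrow> ('b \<Rightarrow> 'e) \<Rightarrow> bool" where
  "tmatch L K G gV gE \<longleftrightarrow> tmorph L G gV gE \<and> inj_on gV (tnodes L) \<and> inj_on gE (tedges L)
     \<and> (\<forall>e \<in> tedges G - gE ` tedges L.
           tsrc G e \<notin> gV ` (tnodes L - tnodes K) \<and> ttgt G e \<notin> gV ` (tnodes L - tnodes K))"

lemma rderiv_iff_rmatch:
  "rderiv L K R G H \<longleftrightarrow> (\<exists>gV gE. rmatch L K G gV gE \<and> riso (rresult G L K R gV gE) H)"
  unfolding rderiv_def rmatch_def by (simp only: conj_assoc)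

lemma tderiv_iff_tmatch:
  "tderiv L K R G H \<longleftrightarrow> (\<exists>gV gE. tmatch L K G gV gE \<and> tiso (tresult G L K R gV gE) H)"
  unfolding tderiv_def tmatch_def by (simp only: conj_assoc)

lemma tmatch_cong:
  assumes agree: "\<And>x. x \<in> tedges L \<Longrightarrow> f x = g x"
  shows "tmatch L K G gV f \<longleftrightarrow> tmatch L K G gV g"
proof -
  have "f ` tedges L = g ` tedges L"
    using agree by (rule image_cong[OF refl])
  then show ?thesis
    by (simp add: tmatch_def tmorph_cong[OF agree] inj_on_cong[OF agree])
qed

lemma tresult_cong:
  "(\<And>x. x \<in> tedges L \<Longrightarrow> f x = g x) \<Longrightarrow> tresult G L K R gV f = tresult G L K R gV g"
proof -
  assume "\<And>x. x \<in> tedges L \<Longrightarrow> f x = g x"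
  then have "f ` (tedges L - tedges K) = g ` (tedges L - tedges K)"
    by (intro image_cong) auto
  then show ?thesis unfolding tresult_def by simp
qed

lemma tmatch_enc_canonical:
  assumes "tmatch (enc L) K (enc G) gV gE'"
  obtains gE where "tmatch (enc L) K (enc G) gV (map_enc_edge gV gE)"
    and "tresult (enc G) (enc L) K R gV gE' = tresult (enc G) (enc L) K R gV (map_enc_edge gV gE)"
proof -
  obtain gE where agree: "\<And>x. x \<in> tedges (enc L) \<Longrightarrow> gE' x = map_enc_edge gV gE x"
    using assms tmorph_enc_factors unfolding tmatch_def by blast
  show thesis
    using that[of gE] assms tmatch_cong[of "enc L" gE' "map_enc_edge gV gE", OF agree]
      tresult_cong[of "enc L" gE' "map_enc_edge gV gE", OF agree] by blast
qed

text \<open>Since L is totally labelled, every loop of G outside the image of the match sits on a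
  node outside the image of the match, so only the encoded edges of G can dangle.\<close>
lemma dangling_enc_iff:
  assumes "total_labels L"
  shows "(\<forall>x \<in> tedges (enc G) - map_enc_edge gV gE ` tedges (enc L).
            tsrc (enc G) x \<notin> gV ` (rnodes L - rnodes K) \<and> ttgt (enc G) x \<notin> gV ` (rnodes L - rnodes K))
    \<longleftrightarrow> (\<forall>e \<in> redges G - gE ` redges L.
            rsrc G e \<notin> gV ` (rnodes L - rnodes K) \<and> rtgt G e \<notin> gV ` (rnodes L - rnodes K))"
proof -
  have unmatched: "tedges (enc G) - map_enc_edge gV gE ` tedges (enc L)
      = EE ` (redges G - gE ` redges L) \<union> ELab ` (dom (rnlab G) - gV ` rnodes L)
        \<union> ERoot ` (dom (rroot G) - gV ` rnodes L)"
    unfolding tedges_enc[of G] tedges_enc_total[OF assms] image_map_enc_edge enc_edge_sets_diff ..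
  have loops: "(\<forall>w \<in> D - gV ` rnodes L.
      w \<notin> gV ` (rnodes L - rnodes K) \<and> w \<notin> gV ` (rnodes L - rnodes K)) = True" for D
    by blast
  show ?thesis
    unfolding unmatched ball_enc_edge_sets enc_simps loops by simp
qed

lemma tmatch_enc_iff_rmatch:
  assumes "total_labels L"
  shows "tmatch (enc L) (enc K) (enc G) gV (map_enc_edge gV gE) \<longleftrightarrow> rmatch L K G gV gE"
proof (cases "inj_on gV (rnodes L)")
  case True
  then have "inj_on (map_enc_edge gV gE) (tedges (enc L)) \<longleftrightarrow> inj_on gE (redges L)"
    by (simp add: tedges_enc_total[OF assms] inj_on_map_enc_edge_iff)
  with True show ?thesis
    unfolding tmatch_def rmatch_def
    by (simp add: tmorph_enc_iff_rmorph[OF assms] dangling_enc_iff[OF assms])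
next
  case False
  then show ?thesis unfolding tmatch_def rmatch_def by simp
qed

section \<open>The result of a rule application\<close>

text \<open>The R-GT result keeps the label and rootedness of the deleted nodes of G outside its node
  set. Isomorphism ignores them but the encoding would turn them into loops, so they are cut off.\<close>
definition rtrim :: "('v,'e,'lv,'le) rgraph \<Rightarrow> ('v,'e,'lv,'le) rgraph" where
  "rtrim G = G\<lparr>rnlab := rnlab G |` rnodes G, rroot := rroot G |` rnodes G\<rparr>"

lemma rtrim_simps [simp]:
  "rnodes (rtrim G) = rnodes G" "redges (rtrim G) = redges G" "rsrc (rtrim G) = rsrc G"
  "rtgt (rtrim G) = rtgt G" "relab (rtrim G) = relab G"
  "rnlab (rtrim G) = rnlab G |` rnodes G" "rroot (rtrim G) = rroot G |` rnodes G"
  unfolding rtrim_def by simp_all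

lemma riso_rtrim: "riso (rtrim A) B \<longleftrightarrow> riso A B"
  unfolding riso_def by simp

definition glue :: "('a \<Rightarrow> 'v) \<Rightarrow> 'a set \<Rightarrow> 'v + 'a \<Rightarrow> 'v + 'a" where
  "glue g VK = case_sum Inl (\<lambda>v. if v \<in> VK then Inl (g v) else Inr v)"

lemma glue_Inl [simp]: "glue g VK (Inl w) = Inl w"
  unfolding glue_def by simp

lemma glue_Inr: "glue g VK (Inr v) = (if v \<in> VK then Inl (g v) else Inr v)"
  unfolding glue_def by simp

lemma glue_override_attr:
  assumes inj: "inj_on g VL" and KL: "VK \<subseteq> VL" and "dom fK \<subseteq> VK"
    and n: "n \<in> Inl ` (VG - g ` (VL - dom fK)) \<union> Inr ` (VR - dom fK)"
  shows "case_sum (\<lambda>w. if w \<in> g ` {k \<in> VK. fK k = None} then fR (the_inv_into VL g w) else fG w) fR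
      (glue g VK n) = case_sum fG fR n"
proof -
  have unset: "g ` {k \<in> VK. fK k = None} \<subseteq> g ` (VL - dom fK)"
    using KL by auto
  from n consider (kept) w where "n = Inl w" "w \<notin> g ` (VL - dom fK)"
    | (overridden) v where "n = Inr v" "v \<in> VK" "fK v = None"
    | (added) v where "n = Inr v" "v \<notin> VK"
    by (cases n) (auto simp: domIff)
  then show ?thesis
  proof cases
    case kept
    with unset show ?thesis by auto
  next
    case overridden
    with KL have "v \<in> VL" by auto
    with overridden show ?thesis by (auto simp: glue_Inr the_inv_into_f_f[OF inj])
  next
    case added
    then show ?thesis by (simp add: glue_Inr)
  qed
qed

definition merge_enc_edge :: "('v,'e) enc_edge + ('a,'b) enc_edge \<Rightarrow> ('v + 'a, 'e + 'b) enc_edge" where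
  "merge_enc_edge = case_sum (map_enc_edge Inl Inl) (map_enc_edge Inr Inr)"

lemma inj_merge_enc_edge: "inj merge_enc_edge"
proof (rule injI)
  fix x y
  have disjoint: "map_enc_edge Inl Inl a \<noteq> map_enc_edge Inr Inr b" for a b
    by (cases a; cases b) simp_all
  assume "merge_enc_edge x = merge_enc_edge y"
  then show "x = y"
    unfolding merge_enc_edge_def
    by (cases x; cases y)
      (auto simp: disjoint disjoint[symmetric]
        dest: injD[OF enc_edge.inj_map[OF inj_Inl inj_Inl]]
          injD[OF enc_edge.inj_map[OF inj_Inr inj_Inr]])
qed

lemma image_merge_enc_edge:
  "merge_enc_edge `
      (Inl ` (EE ` E \<union> ELab ` A \<union> ERoot ` B) \<union> Inr ` (EE ` E' \<union> ELab ` A' \<union> ERoot ` B'))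
     = EE ` (Inl ` E \<union> Inr ` E') \<union> ELab ` (Inl ` A \<union> Inr ` A') \<union> ERoot ` (Inl ` B \<union> Inr ` B')"
  unfolding merge_enc_edge_def by (simp add: image_Un image_image; blast)

locale rule_application =
  fixes L K R :: "('a,'b,'lv,'le) rgraph" and G :: "('v,'e,'lv,'le) rgraph"
    and gV :: "'a \<Rightarrow> 'v" and gE :: "'b \<Rightarrow> 'e"
  assumes rule: "rrule L K R" and total_G: "total_labels G"
    and nodes_into: "gV ` rnodes L \<subseteq> rnodes G" and inj_gV: "inj_on gV (rnodes L)"
begin

abbreviation result :: "('v + 'a, 'e + 'b, 'lv, 'le) rgraph" where
  "result \<equiv> rresult G L K R gV gE"

abbreviation enc_result where
  "enc_result \<equiv> tresult (enc G) (enc L) (enc K) (enc R) gV (map_enc_edge gV gE)"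

lemma total_L: "total_labels L" and total_R: "total_labels R"
  using rule tlrg_total_labels unfolding rrule_def by auto

lemma K_sub_L: "rnodes K \<subseteq> rnodes L" and K_sub_R: "rnodes K \<subseteq> rnodes R"
  using rule unfolding rrule_def rsubgraph_def by auto

lemma dom_K: "dom (rnlab K) \<subseteq> rnodes K" "dom (rroot K) \<subseteq> rnodes K"
  using rule unfolding rrule_def rwf_def by auto

text \<open>For D the K-nodes on which K keeps the label (or the rootedness), carriers D indexes the
  label (root) loops of the T-GT result: the loops of G that survive and the loops of R that
  are added.\<close>
definition carriers :: "'a set \<Rightarrow> ('v + 'a) set" where
  "carriers D = Inl ` (rnodes G - gV ` (rnodes L - D)) \<union> Inr ` (rnodes R - D)"

lemma rnodes_result: "rnodes result = carriers (rnodes K)"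
  unfolding carriers_def rresult_def Let_def by simp

lemma inj_on_glue_carriers: "inj_on (glue gV (rnodes K)) (carriers D)"
proof (rule inj_onI)
  let ?glue = "glue gV (rnodes K)"
  have cross: "Inl w \<noteq> ?glue (Inr v)" if "Inl w \<in> carriers D" "Inr v \<in> carriers D" for w v
  proof
    assume "Inl w = ?glue (Inr v)"
    then have "v \<in> rnodes K" "w = gV v" by (auto simp: glue_Inr split: if_splits)
    moreover have "v \<notin> D" "w \<notin> gV ` (rnodes L - D)"
      using that by (auto simp: carriers_def)
    ultimately show False using K_sub_L by blast
  qed
  fix x y assume x: "x \<in> carriers D" and y: "y \<in> carriers D" and eq: "?glue x = ?glue y"
  show "x = y"
  proof (cases x; cases y)
    fix a b assume "x = Inr a" "y = Inr b"
    with eq K_sub_L inj_gV show "x = y"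
      by (auto simp: glue_Inr split: if_splits dest: inj_onD)
  qed (use x y eq cross in \<open>force+\<close>)
qed

lemma image_glue_carriers:
  assumes D: "D \<subseteq> rnodes K"
  shows "glue gV (rnodes K) ` carriers D = rnodes result"
proof
  let ?glue = "glue gV (rnodes K)"
  have image_K: "gV k \<in> rnodes G - gV ` (rnodes L - rnodes K)" if "k \<in> rnodes K" for k
  proof -
    have "k \<in> rnodes L" using that K_sub_L by blast
    then show ?thesis using that nodes_into inj_gV by (auto dest: inj_onD)
  qed
  have deleted: "gV ` (rnodes L - rnodes K) \<subseteq> gV ` (rnodes L - D)"
    using D by blast
  show "?glue ` carriers D \<subseteq> rnodes result"
  proof
    fix n assume "n \<in> ?glue ` carriers D"
    then obtain m where m: "m \<in> carriers D" and n: "n = ?glue m" by blast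
    show "n \<in> rnodes result"
    proof (cases m)
      case (Inl w)
      with m n deleted show ?thesis by (auto simp: rnodes_result carriers_def)
    next
      case (Inr v)
      with m n image_K show ?thesis
        by (cases "v \<in> rnodes K") (auto simp: rnodes_result carriers_def glue_Inr)
    qed
  qed
  show "rnodes result \<subseteq> ?glue ` carriers D"
  proof
    fix n assume "n \<in> rnodes result"
    then consider (kept) w where "n = Inl w" "w \<in> rnodes G" "w \<notin> gV ` (rnodes L - D)"
      | (overridden) k where "n = Inl (gV k)" "k \<in> rnodes K - D"
      | (added) v where "n = Inr v" "v \<in> rnodes R - rnodes K"
      unfolding rnodes_result carriers_def by blast
    then show "n \<in> ?glue ` carriers D"
    proof cases
      case kept
      then have "Inl w \<in> carriers D" by (simp add: carriers_def)
      with kept show ?thesis by force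
    next
      case overridden
      with K_sub_R have "Inr k \<in> carriers D" by (auto simp: carriers_def)
      with overridden show ?thesis by (force simp: glue_Inr)
    next
      case added
      with D have "Inr v \<in> carriers D" by (auto simp: carriers_def)
      with added show ?thesis by (force simp: glue_Inr)
    qed
  qed
qed

lemma bij_betw_glue_carriers:
  "D \<subseteq> rnodes K \<Longrightarrow> bij_betw (glue gV (rnodes K)) (carriers D) (rnodes result)"
  unfolding bij_betw_def using inj_on_glue_carriers image_glue_carriers by blast

lemma rnlab_result:
  "rnlab result = case_sum (\<lambda>w. if w \<in> gV ` {k \<in> rnodes K. rnlab K k = None}
     then rnlab R (the_inv_into (rnodes L) gV w) else rnlab G w) (rnlab R)"
  unfolding rresult_def Let_def by simp

lemma rroot_result:
  "rroot result = case_sum (\<lambda>w. if w \<in> gV ` {k \<in> rnodes K. rroot K k = None}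
     then rroot R (the_inv_into (rnodes L) gV w) else rroot G w) (rroot R)"
  unfolding rresult_def Let_def by simp

lemma rnlab_result_glue:
  "n \<in> carriers (dom (rnlab K)) \<Longrightarrow>
    rnlab result (glue gV (rnodes K) n) = case_sum (rnlab G) (rnlab R) n"
  unfolding rnlab_result carriers_def by (rule glue_override_attr[OF inj_gV K_sub_L dom_K(1)])

lemma rroot_result_glue:
  "n \<in> carriers (dom (rroot K)) \<Longrightarrow>
    rroot result (glue gV (rnodes K) n) = case_sum (rroot G) (rroot R) n"
  unfolding rroot_result carriers_def by (rule glue_override_attr[OF inj_gV K_sub_L dom_K(2)])

lemma result_attrs_defined:
  assumes n: "n \<in> rnodes result"
  shows "n \<in> dom (rnlab result)" "n \<in> dom (rroot result)"
proof -
  have defined: "case_sum fG fR m \<noteq> None"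
    if "m \<in> carriers D" "dom fG = rnodes G" "dom fR = rnodes R" for m D fG fR
  proof (cases m)
    case (Inl w)
    with that have "w \<in> dom fG" by (auto simp: carriers_def)
    with Inl show ?thesis by auto
  next
    case (Inr v)
    with that have "v \<in> dom fR" by (auto simp: carriers_def)
    with Inr show ?thesis by auto
  qed
  obtain m where m: "m \<in> carriers (dom (rnlab K))" "n = glue gV (rnodes K) m"
    using image_glue_carriers[OF dom_K(1)] n by blast
  with defined[of m _ "rnlab G" "rnlab R"] total_G total_R show "n \<in> dom (rnlab result)"
    by (auto simp: total_labels_def rnlab_result_glue)
  obtain m' where m': "m' \<in> carriers (dom (rroot K))" "n = glue gV (rnodes K) m'"
    using image_glue_carriers[OF dom_K(2)] n by blast
  with defined[of m' _ "rroot G" "rroot R"] total_G total_R show "n \<in> dom (rroot result)"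
    by (auto simp: total_labels_def rroot_result_glue)
qed

lemma total_labels_rtrim_result: "total_labels (rtrim result)"
  using result_attrs_defined unfolding total_labels_def by auto

lemma merge_tedges_enc_result:
  "merge_enc_edge ` tedges enc_result
     = EE ` redges result \<union> ELab ` carriers (dom (rnlab K)) \<union> ERoot ` carriers (dom (rroot K))"
proof -
  have "tedges enc_result =
      Inl ` (EE ` (redges G - gE ` (redges L - redges K))
             \<union> ELab ` (rnodes G - gV ` (rnodes L - dom (rnlab K)))
             \<union> ERoot ` (rnodes G - gV ` (rnodes L - dom (rroot K))))
      \<union> Inr ` (EE ` (redges R - redges K) \<union> ELab ` (rnodes R - dom (rnlab K))
             \<union> ERoot ` (rnodes R - dom (rroot K)))"
    unfolding tresult_def Let_def
    by (simp add: tedges_enc_total total_G total_L total_R tedges_enc[of K]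
        image_map_enc_edge enc_edge_sets_diff)
  then show ?thesis
    by (simp add: image_merge_enc_edge carriers_def rresult_def Let_def)
qed

lemma enc_result_simps:
  "tnodes enc_result = rnodes result" "tnlab enc_result v = Box"
  "tsrc enc_result (Inl y) = Inl (tsrc (enc G) y)"
  "tsrc enc_result (Inr z) = glue gV (rnodes K) (Inr (tsrc (enc R) z))"
  "ttgt enc_result (Inl y) = Inl (ttgt (enc G) y)"
  "ttgt enc_result (Inr z) = glue gV (rnodes K) (Inr (ttgt (enc R) z))"
  "telab enc_result (Inl y) = telab (enc G) y" "telab enc_result (Inr z) = telab (enc R) z"
  unfolding tresult_def rresult_def Let_def by (simp_all add: glue_Inr split: sum.split)

lemma result_edge_simps:
  "rsrc result (Inl e) = Inl (rsrc G e)"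
  "rsrc result (Inr e') = glue gV (rnodes K) (Inr (rsrc R e'))"
  "rtgt result (Inl e) = Inl (rtgt G e)"
  "rtgt result (Inr e') = glue gV (rnodes K) (Inr (rtgt R e'))"
  "relab result (Inl e) = relab G e" "relab result (Inr e') = relab R e'"
  unfolding rresult_def Let_def by (simp_all add: glue_Inr)

definition edge_iso :: "('v,'e) enc_edge + ('a,'b) enc_edge \<Rightarrow> ('v + 'a, 'e + 'b) enc_edge" where
  "edge_iso = map_enc_edge (glue gV (rnodes K)) id \<circ> merge_enc_edge"

lemma bij_betw_edge_iso: "bij_betw edge_iso (tedges enc_result) (tedges (enc (rtrim result)))"
proof -
  have "bij_betw merge_enc_edge (tedges enc_result) (merge_enc_edge ` tedges enc_result)"
    by (rule inj_on_imp_bij_betw[OF inj_on_subset[OF inj_merge_enc_edge subset_UNIV]])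
  moreover have "bij_betw (map_enc_edge (glue gV (rnodes K)) id)
      (merge_enc_edge ` tedges enc_result) (tedges (enc (rtrim result)))"
    unfolding merge_tedges_enc_result tedges_enc_total[OF total_labels_rtrim_result] rtrim_simps
    by (intro bij_betw_map_enc_edge_iff[THEN iffD2] bij_betw_glue_carriers dom_K bij_betw_id)
  ultimately show ?thesis
    unfolding edge_iso_def by (rule bij_betw_trans)
qed

lemma edge_iso_preserves:
  assumes x: "x \<in> tedges enc_result"
  shows "tsrc (enc (rtrim result)) (edge_iso x) = tsrc enc_result x
    \<and> ttgt (enc (rtrim result)) (edge_iso x) = ttgt enc_result x
    \<and> telab (enc (rtrim result)) (edge_iso x) = telab enc_result x"
proof -
  let ?glue = "glue gV (rnodes K)"
  have mem: "merge_enc_edge x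
      \<in> EE ` redges result \<union> ELab ` carriers (dom (rnlab K)) \<union> ERoot ` carriers (dom (rroot K))"
    using x merge_tedges_enc_result by blast
  have label: "telab (enc (rtrim result)) (ELab (?glue n))
      = NodeL (the (case_sum (rnlab G) (rnlab R) n))"
    if "n \<in> carriers (dom (rnlab K))" for n
    using rnlab_result_glue[OF that] bij_betw_apply[OF bij_betw_glue_carriers[OF dom_K(1)] that]
    by simp
  have root: "telab (enc (rtrim result)) (ERoot (?glue n))
      = RootBit (the (case_sum (rroot G) (rroot R) n))"
    if "n \<in> carriers (dom (rroot K))" for n
    using rroot_result_glue[OF that] bij_betw_apply[OF bij_betw_glue_carriers[OF dom_K(2)] that]
    by simp
  show ?thesis
  proof (cases x)
    case (Inl y)
    have "telab (enc (rtrim result)) (ELab (Inl w)) = NodeL (the (rnlab G w))"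
      if "Inl w \<in> carriers (dom (rnlab K))" for w
      using label[OF that] by simp
    moreover have "telab (enc (rtrim result)) (ERoot (Inl w)) = RootBit (the (rroot G w))"
      if "Inl w \<in> carriers (dom (rroot K))" for w
      using root[OF that] by simp
    ultimately show ?thesis
      using mem Inl
      by (cases y) (auto simp: edge_iso_def merge_enc_edge_def enc_result_simps result_edge_simps)
  next
    case (Inr z)
    with mem label root show ?thesis
      by (cases z) (auto simp: edge_iso_def merge_enc_edge_def enc_result_simps result_edge_simps)
  qed
qed

lemma tiso_enc_result:
  "tiso enc_result (enc (rtrim result)) \<and> tiso (enc (rtrim result)) enc_result"
proof -
  have "tnodes enc_result = tnodes (enc (rtrim result))"
    by (simp add: enc_result_simps)
  moreover have "tnlab (enc (rtrim result)) v = tnlab enc_result v" for v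
    by (simp add: enc_result_simps)
  ultimately show ?thesis
    using tiso_edge_renaming[OF _ _ bij_betw_edge_iso edge_iso_preserves] by blast
qed

lemma tiso_enc_result_iff:
  assumes "total_labels H"
  shows "tiso enc_result (enc H) \<longleftrightarrow> riso result H"
proof -
  have "tiso enc_result (enc H) \<longleftrightarrow> tiso (enc (rtrim result)) (enc H)"
    using tiso_enc_result tiso_trans[of enc_result "enc (rtrim result)" "enc H"]
      tiso_trans[of "enc (rtrim result)" enc_result "enc H"] by blast
  also have "\<dots> \<longleftrightarrow> riso (rtrim result) H"
    using riso_iff_tiso_enc[OF total_labels_rtrim_result assms] by simp
  also have "\<dots> \<longleftrightarrow> riso result H"
    by (rule riso_rtrim)
  finally show ?thesis .
qed

end

lemma tiso_tresult_enc_iff_riso: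
  assumes "rrule L K R" "total_labels G" "total_labels H" "rmatch L K G gV gE"
  shows "tiso (tresult (enc G) (enc L) (enc K) (enc R) gV (map_enc_edge gV gE)) (enc H)
    \<longleftrightarrow> riso (rresult G L K R gV gE) H"
proof -
  interpret rule_application L K R G gV gE
    using assms unfolding rule_application_def rmatch_def rmorph_def by blast
  show ?thesis
    by (rule tiso_enc_result_iff[OF assms(3)])
qed

theorem theorem6p1:
  fixes L K R :: "('a,'b,'lv,'le) rgraph"
    and G :: "('v,'e,'lv,'le) rgraph"
    and H :: "('w,'f,'lv,'le) rgraph"
  assumes "rrule L K R"
    and "tlrg G" and "tlrg H"
  shows "rderiv L K R G H \<longleftrightarrow> tderiv (enc L) (enc K) (enc R) (enc G) (enc H)"
proof -
  have total: "total_labels L" "total_labels G" "total_labels H"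
    using assms by (auto simp: rrule_def tlrg_total_labels)
  note match_iff = tmatch_enc_iff_rmatch[OF total(1)]
    and result_iff = tiso_tresult_enc_iff_riso[OF assms(1) total(2,3)]
  show ?thesis
  proof
    assume "rderiv L K R G H"
    then obtain gV gE where "rmatch L K G gV gE" "riso (rresult G L K R gV gE) H"
      unfolding rderiv_iff_rmatch by blast
    then show "tderiv (enc L) (enc K) (enc R) (enc G) (enc H)"
      unfolding tderiv_iff_tmatch using match_iff result_iff by blast
  next
    assume "tderiv (enc L) (enc K) (enc R) (enc G) (enc H)"
    then obtain gV gE' where m: "tmatch (enc L) (enc K) (enc G) gV gE'"
      and i: "tiso (tresult (enc G) (enc L) (enc K) (enc R) gV gE') (enc H)"
      unfolding tderiv_iff_tmatch by blast
    from m obtain gE where "tmatch (enc L) (enc K) (enc G) gV (map_enc_edge gV gE)"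
      and eq: "tresult (enc G) (enc L) (enc K) (enc R) gV gE'
        = tresult (enc G) (enc L) (enc K) (enc R) gV (map_enc_edge gV gE)"
      by (rule tmatch_enc_canonical)
    then have "rmatch L K G gV gE" by (simp add: match_iff)
    with i eq show "rderiv L K R G H"
      unfolding rderiv_iff_rmatch using result_iff by auto
  qed
qed

end
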